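(* Let $H$ be a reasonable Hintikka tree with induced measure $\beta$, and for a sentence $\varphi$ of depth $d$ let $\boldsymbol{\varphi} = \sum_{\delta^{(d)} \in \mathrm{dnf}(\varphi)} \chi_{[\delta^{(0)}\cdots\delta^{(d)}]} \in L^2(\Psi^\omega, \beta)$. Then for all sentences $\varphi, \varphi_1, \varphi_2$: (1) $\langle \boldsymbol{\varphi}, \boldsymbol{\lnot\varphi} \rangle = 0$; (2) $\boldsymbol{\varphi_1 \lor \varphi_2} = \boldsymbol{\varphi_1} \oplus \boldsymbol{\varphi_2}$, where $(f \oplus g)(x) = \max(f(x), g(x))$; (3) if $\langle \boldsymbol{\varphi_1}, \boldsymbol{\varphi_2} \rangle = 0$ then $\varphi_1 \models \lnot \varphi_2$.
   Context: $L$ is a first-order language without equality with finitely many predicate symbols and no function or constant symbols. For $d \in \mathbb{N}$, $\Delta^{(d)}$ is the finite set of Hintikka constituents of depth $d$ with no free variables ($\Delta^{(0)} = \{\top\}$); distinct constituents of the same depth are mutually exclusive, every sentence $\varphi$ of quantifier depth $d$ is logically equivalent to the disjunction of a set $\mathrm{dnf}(\varphi) \subseteq \Delta^{(d)}$ (its Hintikka distributive normal form), and $\mathrm{expand}(e,\delta^{(d)})\subseteq\Delta^{(d+e)}$ denotes the expansions of $\delta^{(d)}$, whose disjunction is equivalent to $\delta^{(d)}$. A fixed decidable criterion of trivial inconsistency for constituents is given; trivially inconsistent constituents are inconsistent (unsatisfiable). Refinement tree: on $\Delta = \bigcup_d \Delta^{(d)}$ put an edge from each $\delta^{(d)}$ to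 each member of $\mathrm{expand}(1,\delta^{(d)})$, keeping a constituent lying in several depth-$d$ expansions as child of only one of them. A Hintikka tree is a function $H: \Delta \to [0,1]$ with $H(\delta^{(0)}) = 1$ and $H(\delta) = \sum_{\delta' \text{ child of } \delta} H(\delta')$; it is reasonable if $H(\delta) > 0$ for every constituent $\delta$ that is not trivially inconsistent. $\Psi^\omega$ is the set of infinite root paths in the refinement tree with the topology generated by cylinders $[\delta^{(0)}\cdots\delta^{(d)}]$ (paths with that prefix; here $\delta^{(0)}\cdots\delta^{(d)}$ is the root path to $\delta^{(d)}$), $\beta$ is the unique Borel probability measure with $\beta([\delta^{(0)}\cdots\delta^{(d)}]) = H(\delta^{(d)})$, $\chi_X$ is the indicator of $X$, and $L^2(\Psi^\omega,\beta)$ has inner product $\langle f, g\rangle = \int f g\, d\beta$. *)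

theory Defs
  imports "HOL-Probability.Probability" "HOL-Library.FSet"
begin

section \<open>First-order language without equality, no function/constant symbols\<close>

text \<open>The signature is a list sig of arities: predicate symbol p (p < length sig)
  has arity sig ! p.  Variables are natural numbers.\<close>

datatype fm = FTrue | Atom nat "nat list" | Neg fm | Disj fm fm | Conj fm fm
  | Ex nat fm | All nat fm

primrec wf :: "nat list \<Rightarrow> fm \<Rightarrow> bool" where
  "wf sig FTrue = True"
| "wf sig (Atom p xs) = (p < length sig \<and> length xs = sig ! p)"
| "wf sig (Neg f) = wf sig f"
| "wf sig (Disj f g) = (wf sig f \<and> wf sig g)"
| "wf sig (Conj f g) = (wf sig f \<and> wf sig g)"
| "wf sig (Ex v f) = wf sig f"
| "wf sig (All v f) = wf sig f"

primrec fv :: "fm \<Rightarrow> nat set" where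
  "fv FTrue = {}"
| "fv (Atom p xs) = set xs"
| "fv (Neg f) = fv f"
| "fv (Disj f g) = fv f \<union> fv g"
| "fv (Conj f g) = fv f \<union> fv g"
| "fv (Ex v f) = fv f - {v}"
| "fv (All v f) = fv f - {v}"

definition sentence :: "nat list \<Rightarrow> fm \<Rightarrow> bool" where
  "sentence sig f \<longleftrightarrow> wf sig f \<and> fv f = {}"

primrec qd :: "fm \<Rightarrow> nat" where
  "qd FTrue = 0"
| "qd (Atom p xs) = 0"
| "qd (Neg f) = qd f"
| "qd (Disj f g) = max (qd f) (qd g)"
| "qd (Conj f g) = max (qd f) (qd g)"
| "qd (Ex v f) = Suc (qd f)"
| "qd (All v f) = Suc (qd f)"

text \<open>Tarskian semantics: a structure is a (nonempty) domain D with an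
  interpretation I of the predicate symbols; v is a variable assignment into D.\<close>
primrec sat :: "'a set \<Rightarrow> (nat \<Rightarrow> 'a list \<Rightarrow> bool) \<Rightarrow> (nat \<Rightarrow> 'a) \<Rightarrow> fm \<Rightarrow> bool" where
  "sat D I v FTrue = True"
| "sat D I v (Atom p xs) = I p (map v xs)"
| "sat D I v (Neg f) = (\<not> sat D I v f)"
| "sat D I v (Disj f g) = (sat D I v f \<or> sat D I v g)"
| "sat D I v (Conj f g) = (sat D I v f \<and> sat D I v g)"
| "sat D I v (Ex x f) = (\<exists>a\<in>D. sat D I (v(x := a)) f)"
| "sat D I v (All x f) = (\<forall>a\<in>D. sat D I (v(x := a)) f)"

section \<open>Hintikka constituents\<close>

text \<open>Atoms that contain the variable k and otherwise only variables among 1..k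
  (the atomic part of an attributive constituent with variables x1..xk).\<close>
definition newatoms :: "nat list \<Rightarrow> nat \<Rightarrow> (nat \<times> nat list) list" where
  "newatoms sig k = concat (map (\<lambda>p. map (\<lambda>xs. (p, xs))
       (filter (\<lambda>xs. k \<in> set xs) (List.n_lists (sig ! p) [1..<Suc k]))) [0..<length sig])"

definition atomic_conj :: "nat list \<Rightarrow> nat \<Rightarrow> (nat \<times> nat list) set \<Rightarrow> fm" where
  "atomic_conj sig k A = foldr Conj
      (map (\<lambda>a. if a \<in> A then Atom (fst a) (snd a) else Neg (Atom (fst a) (snd a)))
           (newatoms sig k)) FTrue"

definition conj_set :: "fm set \<Rightarrow> fm" where
  "conj_set X = foldr Conj (SOME xs. set xs = X \<and> distinct xs) FTrue"

definition disj_set :: "fm set \<Rightarrow> fm" where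
  "disj_set X = foldr Disj (SOME xs. set xs = X \<and> distinct xs) (Neg FTrue)"

text \<open>Constituents as trees: the set of positive (new) atoms at this level and
  (for non-leaves) the finite set of attributive constituents one level deeper.\<close>
datatype cst = Leaf "(nat \<times> nat list) set" | Node "(nat \<times> nat list) set" "cst fset"

primrec catoms :: "cst \<Rightarrow> (nat \<times> nat list) set" where
  "catoms (Leaf A) = A"
| "catoms (Node A S) = A"

primrec children :: "cst \<Rightarrow> cst fset" where
  "children (Leaf A) = {||}"
| "children (Node A S) = S"

primrec to_fm :: "nat list \<Rightarrow> cst \<Rightarrow> nat \<Rightarrow> fm" where
  "to_fm sig (Leaf A) k = atomic_conj sig k A"
| "to_fm sig (Node A S) k = Conj (atomic_conj sig k A)
     (Conj (conj_set (fset (fimage (\<lambda>c. Ex (Suc k) (to_fm sig c (Suc k))) S)))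
           (All (Suc k) (disj_set (fset (fimage (\<lambda>c. to_fm sig c (Suc k)) S)))))"

fun AC :: "nat list \<Rightarrow> nat \<Rightarrow> nat \<Rightarrow> cst set" where
  "AC sig k 0 = {Leaf A | A. A \<subseteq> set (newatoms sig k)}"
| "AC sig k (Suc e) = {Node A S | A S. A \<subseteq> set (newatoms sig k) \<and> fset S \<subseteq> AC sig (Suc k) e}"

text \<open>Delta sig d: constituents of depth d without free variables (as trees; the
  corresponding sentence is to_fm sig \<delta> 0).  Delta sig 0 = {Leaf {}}, whose formula is FTrue.\<close>
fun Delta :: "nat list \<Rightarrow> nat \<Rightarrow> cst set" where
  "Delta sig 0 = {Leaf {}}"
| "Delta sig (Suc e) = {Node {} S | S. fset S \<subseteq> AC sig 1 e}"

abbreviation root :: cst where "root \<equiv> Leaf {}"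

primrec trunc :: "cst \<Rightarrow> nat \<Rightarrow> cst" where
  "trunc (Leaf A) n = Leaf A"
| "trunc (Node A S) n = (case n of 0 \<Rightarrow> Leaf A | Suc m \<Rightarrow> Node A (fimage (\<lambda>c. trunc c m) S))"

definition expand :: "nat list \<Rightarrow> nat \<Rightarrow> nat \<Rightarrow> cst \<Rightarrow> cst set" where
  "expand sig e d \<delta> = {\<delta>' \<in> Delta sig (d + e). trunc \<delta>' d = \<delta>}"

section \<open>Distributive normal form\<close>

text \<open>Truth of a formula in a constituent: cs = [root, \<gamma>1, ..., \<gamma>k] is a branch of a
  constituent, \<rho> assigns to each variable the level at which it was introduced.\<close>
primrec tv :: "cst list \<Rightarrow> (nat \<Rightarrow> nat) \<Rightarrow> fm \<Rightarrow> bool" where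
  "tv cs \<rho> FTrue = True"
| "tv cs \<rho> (Atom p xs) = ((p, map \<rho> xs) \<in> catoms (cs ! Max (set (map \<rho> xs))))"
| "tv cs \<rho> (Neg f) = (\<not> tv cs \<rho> f)"
| "tv cs \<rho> (Disj f g) = (tv cs \<rho> f \<or> tv cs \<rho> g)"
| "tv cs \<rho> (Conj f g) = (tv cs \<rho> f \<and> tv cs \<rho> g)"
| "tv cs \<rho> (Ex v f) = (\<exists>c\<in>fset (children (last cs)). tv (cs @ [c]) (\<rho>(v := length cs)) f)"
| "tv cs \<rho> (All v f) = (\<forall>c\<in>fset (children (last cs)). tv (cs @ [c]) (\<rho>(v := length cs)) f)"

definition dnf :: "nat list \<Rightarrow> fm \<Rightarrow> cst set" where
  "dnf sig f = {\<delta> \<in> Delta sig (qd f). tv [\<delta>] (\<lambda>_. 0) f}"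

section \<open>Refinement tree, paths, cylinders\<close>

text \<open>Infinite root paths of the refinement tree (f n is the depth-n node).\<close>
definition Psi :: "nat list \<Rightarrow> (nat \<Rightarrow> cst) set" where
  "Psi sig = {f. f 0 = root \<and> (\<forall>n. f (Suc n) \<in> expand sig 1 n (f n))}"

definition cyl :: "nat list \<Rightarrow> nat \<Rightarrow> cst \<Rightarrow> (nat \<Rightarrow> cst) set" where
  "cyl sig d \<delta> = {f \<in> Psi sig. f d = \<delta>}"

definition cyls :: "nat list \<Rightarrow> (nat \<Rightarrow> cst) set set" where
  "cyls sig = {cyl sig d \<delta> | d \<delta>. \<delta> \<in> Delta sig d}"

definition Psi_topology :: "nat list \<Rightarrow> (nat \<Rightarrow> cst) topology" where
  "Psi_topology sig = subtopology (topology_generated_by (cyls sig)) (Psi sig)"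

definition Psi_borel :: "nat list \<Rightarrow> (nat \<Rightarrow> cst) set set" where
  "Psi_borel sig = sigma_sets (Psi sig) {U. openin (Psi_topology sig) U}"

section \<open>Hintikka trees\<close>

definition hintikka_tree :: "nat list \<Rightarrow> (nat \<Rightarrow> cst \<Rightarrow> real) \<Rightarrow> bool" where
  "hintikka_tree sig H \<longleftrightarrow>
     (\<forall>d. \<forall>\<delta>\<in>Delta sig d. 0 \<le> H d \<delta> \<and> H d \<delta> \<le> 1) \<and>
     H 0 root = 1 \<and>
     (\<forall>d. \<forall>\<delta>\<in>Delta sig d. H d \<delta> = (\<Sum>\<delta>'\<in>expand sig 1 d \<delta>. H (Suc d) \<delta>'))"

definition reasonable :: "nat list \<Rightarrow> (cst \<Rightarrow> bool) \<Rightarrow> (nat \<Rightarrow> cst \<Rightarrow> real) \<Rightarrow> bool" where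
  "reasonable sig triv H \<longleftrightarrow> hintikka_tree sig H \<and>
     (\<forall>d. \<forall>\<delta>\<in>Delta sig d. \<not> triv \<delta> \<longrightarrow> H d \<delta> > 0)"

definition induced_measure :: "nat list \<Rightarrow> (nat \<Rightarrow> cst \<Rightarrow> real) \<Rightarrow> (nat \<Rightarrow> cst) measure \<Rightarrow> bool" where
  "induced_measure sig H \<beta> \<longleftrightarrow> prob_space \<beta> \<and> space \<beta> = Psi sig \<and> sets \<beta> = Psi_borel sig \<and>
     (\<forall>d. \<forall>\<delta>\<in>Delta sig d. measure \<beta> (cyl sig d \<delta>) = H d \<delta>)"

definition bold :: "nat list \<Rightarrow> fm \<Rightarrow> (nat \<Rightarrow> cst) \<Rightarrow> real" where
  "bold sig f = (\<lambda>x. \<Sum>\<delta>\<in>dnf sig f. indicator (cyl sig (qd f) \<delta>) x)"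

definition inner_L2 :: "(nat \<Rightarrow> cst) measure \<Rightarrow> ((nat \<Rightarrow> cst) \<Rightarrow> real) \<Rightarrow> ((nat \<Rightarrow> cst) \<Rightarrow> real) \<Rightarrow> real" where
  "inner_L2 \<beta> f g = integral\<^sup>L \<beta> (\<lambda>x. f x * g x)"

end

theory Submission
  imports Defs
begin

(* The function of a sentence f is the indicator of the set of paths whose node at depth qd f
   lies in dnf f, so inner products are measures of intersections of such sets.  The truth value
   of a formula in a constituent does not change when the constituent is truncated to the depth
   of the formula; hence these sets behave like sets of models: those of f and Neg f are disjoint
   and that of Disj f g is the union of those of f and g.  For (3), a model of f and g determines
   its complete type, a constituent of depth max (qd f) (qd g) in which f and g are true.  Being
   satisfiable, it is not trivially inconsistent, so its cylinder has positive measure; and the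
   cylinder lies in the sets of both f and g. *)

section \<open>Finiteness of the sets of constituents\<close>

lemma mem_newatoms_iff:
  "a \<in> set (newatoms sig k) \<longleftrightarrow> fst a < length sig \<and> length (snd a) = sig ! fst a
     \<and> set (snd a) \<subseteq> {1..k} \<and> k \<in> set (snd a)"
  by (cases a) (auto simp: newatoms_def set_n_lists image_iff subset_iff)

lemma newatoms_0: "set (newatoms sig 0) = {}"
proof -
  have "a \<notin> set (newatoms sig 0)" for a
    by (auto simp: mem_newatoms_iff)
  then show ?thesis by (meson equals0I)
qed

lemma finite_fset_subsets: "finite X \<Longrightarrow> finite {S. fset S \<subseteq> X}"
proof -
  assume "finite X"
  moreover have "{S. fset S \<subseteq> X} \<subseteq> Abs_fset ` Pow X"
    by (auto intro!: image_eqI[where x = "fset S" for S] simp: fset_inverse)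
  ultimately show ?thesis by (meson finite_Pow_iff finite_imageI finite_subset)
qed

lemma finite_AC: "finite (AC sig k e)"
proof (induction e arbitrary: k)
  case 0
  have "AC sig k 0 = Leaf ` Pow (set (newatoms sig k))" by auto
  then show ?case by simp
next
  case (Suc e)
  have "AC sig k (Suc e) = case_prod Node `
      (Pow (set (newatoms sig k)) \<times> {S. fset S \<subseteq> AC sig (Suc k) e})"
    by auto
  then show ?case using finite_fset_subsets[OF Suc.IH] by simp
qed

lemma finite_Delta: "finite (Delta sig d)"
proof (cases d)
  case (Suc e)
  have "Delta sig (Suc e) = Node {} ` {S. fset S \<subseteq> AC sig 1 e}" by auto
  then show ?thesis using Suc finite_fset_subsets[OF finite_AC] by simp
qed simp

lemma finite_dnf: "finite (dnf sig f)"
  unfolding dnf_def using finite_Delta by simp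

section \<open>Truncation\<close>

lemma trunc_trunc: "trunc (trunc c n) m = trunc c (min n m)"
proof (induction n arbitrary: c m)
  case 0
  then show ?case by (cases c) auto
next
  case (Suc n)
  then show ?case
    by (cases c; cases m) (auto simp: fset.map_comp o_def)
qed

lemma trunc_AC: "c \<in> AC sig k e \<Longrightarrow> trunc c e = c"
proof (induction e arbitrary: k c)
  case (Suc e)
  then obtain A S where c: "c = Node A S" and S: "fset S \<subseteq> AC sig (Suc k) e" by auto
  have "fimage (\<lambda>c. trunc c e) S = fimage id S"
    by (rule fset.map_cong0) (use S Suc.IH in auto)
  then show ?case using c by simp
qed auto

lemma trunc_Delta: "\<delta> \<in> Delta sig d \<Longrightarrow> trunc \<delta> d = \<delta>"
  by (cases d) (auto intro: trunc_AC)

lemma catoms_trunc: "catoms (trunc c n) = catoms c"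
  by (cases c; cases n) auto

lemma children_trunc_Suc: "children (trunc c (Suc m)) = fimage (\<lambda>c. trunc c m) (children c)"
  by (cases c) auto

lemma Psi_in_Delta: "x \<in> Psi sig \<Longrightarrow> x n \<in> Delta sig n"
  by (cases n) (auto simp: Psi_def expand_def)

lemma Psi_trunc: "x \<in> Psi sig \<Longrightarrow> m \<le> n \<Longrightarrow> x m = trunc (x n) m"
proof (induction n)
  case 0
  then show ?case using trunc_Delta[OF Psi_in_Delta] by simp
next
  case (Suc n)
  show ?case
  proof (cases "m = Suc n")
    case True
    then show ?thesis using trunc_Delta[OF Psi_in_Delta[OF Suc(2)]] by simp
  next
    case False
    then have "x m = trunc (x n) m" using Suc by simp
    moreover have "x n = trunc (x (Suc n)) n" using Suc(2) by (auto simp: Psi_def expand_def)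
    ultimately show ?thesis using False Suc(3) by (simp add: trunc_trunc)
  qed
qed

lemma tv_trunc:
  assumes "cs \<noteq> []" "length cs' = length cs" "\<forall>i. catoms (cs ! i) = catoms (cs' ! i)"
    and "last cs' = trunc (last cs) n" "qd \<phi> \<le> n"
  shows "tv cs \<rho> \<phi> = tv cs' \<rho> \<phi>"
  using assms
proof (induction \<phi> arbitrary: cs cs' \<rho> n)
  case (Ex v f)
  then obtain m where n: "n = Suc m" and "qd f \<le> m" by (cases n) auto
  then have "tv (cs @ [c]) \<rho>' f = tv (cs' @ [trunc c m]) \<rho>' f" for c \<rho>'
    using Ex by (intro Ex.IH) (auto simp: nth_append nth_Cons' catoms_trunc)
  then show ?case using Ex.prems(2,4) n by (simp add: children_trunc_Suc)
next
  case (All v f)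
  then obtain m where n: "n = Suc m" and "qd f \<le> m" by (cases n) auto
  then have "tv (cs @ [c]) \<rho>' f = tv (cs' @ [trunc c m]) \<rho>' f" for c \<rho>'
    using All by (intro All.IH) (auto simp: nth_append nth_Cons' catoms_trunc)
  then show ?case using All.prems(2,4) n by (simp add: children_trunc_Suc)
qed auto

lemma tv_trunc_singleton: "qd \<phi> \<le> n \<Longrightarrow> tv [trunc \<delta> n] \<rho> \<phi> = tv [\<delta>] \<rho> \<phi>"
  by (rule tv_trunc[symmetric]) (auto simp: catoms_trunc nth_Cons split: nat.split)

lemma Psi_dnf_iff_tv:
  assumes "x \<in> Psi sig" "qd \<phi> \<le> n"
  shows "x (qd \<phi>) \<in> dnf sig \<phi> \<longleftrightarrow> tv [x n] (\<lambda>_. 0) \<phi>"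
  using Psi_trunc[OF assms] Psi_in_Delta[OF assms(1), of "qd \<phi>"]
    tv_trunc_singleton[of \<phi> "qd \<phi>" "x n"]
  by (simp add: dnf_def)

section \<open>The constituent realised by an assignment\<close>

definition true_atoms ::
    "nat list \<Rightarrow> (nat \<Rightarrow> 'a list \<Rightarrow> bool) \<Rightarrow> nat \<Rightarrow> (nat \<Rightarrow> 'a) \<Rightarrow> (nat \<times> nat list) set" where
  "true_atoms sig I k w = {a \<in> set (newatoms sig k). I (fst a) (map w (snd a))}"

(* The depth-e type of w 1, ..., w k in the structure (D, I): the attributive constituent
   with variables x1..xk that (D, I, w) satisfies. *)
primrec type_cst ::
    "nat list \<Rightarrow> 'a set \<Rightarrow> (nat \<Rightarrow> 'a list \<Rightarrow> bool) \<Rightarrow> nat \<Rightarrow> nat \<Rightarrow> (nat \<Rightarrow> 'a) \<Rightarrow> cst" where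
  "type_cst sig D I 0 k w = Leaf (true_atoms sig I k w)"
| "type_cst sig D I (Suc e) k w = Node (true_atoms sig I k w)
     (Abs_fset ((\<lambda>a. type_cst sig D I e (Suc k) (w(Suc k := a))) ` D))"

lemma type_cst_AC: "type_cst sig D I e k w \<in> AC sig k e"
proof (induction e arbitrary: k w)
  case 0
  then show ?case by (auto simp: true_atoms_def)
next
  case (Suc e)
  let ?X = "(\<lambda>a. type_cst sig D I e (Suc k) (w(Suc k := a))) ` D"
  have X: "?X \<subseteq> AC sig (Suc k) e" using Suc by auto
  then have "finite ?X" using finite_AC by (rule finite_subset)
  then have "fset (Abs_fset ?X) = ?X" by (simp add: Abs_fset_inverse)
  then show ?case using X by (auto simp: true_atoms_def)
qed

lemma type_cst_Delta: "type_cst sig D I e 0 w \<in> Delta sig e"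
proof (cases e)
  case (Suc e')
  have "type_cst sig D I e 0 w \<in> AC sig 0 e" by (rule type_cst_AC)
  then show ?thesis using Suc by (auto simp: true_atoms_def newatoms_0)
qed (simp add: true_atoms_def newatoms_0)

lemma fset_children_type_cst:
  "fset (children (type_cst sig D I (Suc e) k w))
     = (\<lambda>a. type_cst sig D I e (Suc k) (w(Suc k := a))) ` D"
proof -
  have "(\<lambda>a. type_cst sig D I e (Suc k) (w(Suc k := a))) ` D \<subseteq> AC sig (Suc k) e"
    using type_cst_AC by auto
  then have "finite ((\<lambda>a. type_cst sig D I e (Suc k) (w(Suc k := a))) ` D)"
    using finite_AC by (rule finite_subset)
  then show ?thesis by (simp add: Abs_fset_inverse)
qed

lemma catoms_type_cst: "catoms (type_cst sig D I e k w) = true_atoms sig I k w"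
  by (cases e) auto

lemma true_atoms_fun_upd: "j < m \<Longrightarrow> true_atoms sig I j (w(m := a)) = true_atoms sig I j w"
proof -
  assume "j < m"
  then have "map (w(m := a)) (snd x) = map w (snd x)" if "x \<in> set (newatoms sig j)" for x
    using that by (auto simp: mem_newatoms_iff intro!: map_cong)
  then show ?thesis unfolding true_atoms_def by (metis (mono_tags))
qed

section \<open>Truth in the realised constituent is truth in the structure\<close>

(* cs is a branch [\<gamma>0, ..., \<gamma>n] of the type of w 1, ..., w n: node j carries the atoms
   true of w 1, ..., w j, and the last node is the type itself. *)
definition type_branch ::
    "nat list \<Rightarrow> 'a set \<Rightarrow> (nat \<Rightarrow> 'a list \<Rightarrow> bool) \<Rightarrow> nat \<Rightarrow> (nat \<Rightarrow> 'a) \<Rightarrow> cst list \<Rightarrow> bool" where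
  "type_branch sig D I e w cs \<longleftrightarrow> cs \<noteq> [] \<and>
     (\<forall>j < length cs. catoms (cs ! j) = true_atoms sig I j w) \<and>
     last cs = type_cst sig D I e (length cs - 1) w"

lemma type_branch_children:
  "type_branch sig D I (Suc e) w cs \<Longrightarrow> fset (children (last cs))
     = (\<lambda>a. type_cst sig D I e (length cs) (w(length cs := a))) ` D"
  using fset_children_type_cst[of sig D I e "length cs - 1" w]
  by (simp add: type_branch_def)

lemma type_branch_snoc:
  "type_branch sig D I (Suc e) w cs \<Longrightarrow>
   type_branch sig D I e (w(length cs := a))
     (cs @ [type_cst sig D I e (length cs) (w(length cs := a))])"
  by (auto simp: type_branch_def nth_append less_Suc_eq true_atoms_fun_upd catoms_type_cst)

lemma comp_fun_upd_fresh:
  fixes n :: nat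
  assumes "\<forall>y. \<rho> y < n"
  shows "w(n := a) \<circ> \<rho>(v := n) = (w \<circ> \<rho>)(v := a)"
proof -
  have "\<rho> y \<noteq> n" for y using assms by (metis less_irrefl)
  then show ?thesis by (auto simp: fun_eq_iff)
qed

lemma tv_type_branch_quantifiers:
  assumes IH: "\<And>cs \<rho> w. type_branch sig D I e w cs \<Longrightarrow> \<forall>y. \<rho> y < length cs \<Longrightarrow>
      \<forall>y\<in>fv f. 1 \<le> \<rho> y \<Longrightarrow> tv cs \<rho> f = sat D I (w \<circ> \<rho>) f"
    and branch: "type_branch sig D I (Suc e) w cs"
    and \<rho>: "\<forall>y. \<rho> y < length cs" "\<forall>y\<in>fv f - {v}. 1 \<le> \<rho> y"
  shows "tv cs \<rho> (Ex v f) = sat D I (w \<circ> \<rho>) (Ex v f)"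
    and "tv cs \<rho> (All v f) = sat D I (w \<circ> \<rho>) (All v f)"
proof -
  let ?n = "length cs"
  let ?c = "\<lambda>a. type_cst sig D I e ?n (w(?n := a))"
  have "tv (cs @ [?c a]) (\<rho>(v := ?n)) f = sat D I (w(?n := a) \<circ> \<rho>(v := ?n)) f" for a
  proof (rule IH)
    show "type_branch sig D I e (w(?n := a)) (cs @ [?c a])"
      using branch by (rule type_branch_snoc)
    show "\<forall>y. (\<rho>(v := ?n)) y < length (cs @ [?c a])"
      using \<rho>(1) by (simp add: less_SucI)
    show "\<forall>y\<in>fv f. 1 \<le> (\<rho>(v := ?n)) y"
      using \<rho>(2) branch by (auto simp: type_branch_def Suc_le_eq)
  qed
  then have "tv (cs @ [?c a]) (\<rho>(v := ?n)) f = sat D I ((w \<circ> \<rho>)(v := a)) f" for a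
    by (simp add: comp_fun_upd_fresh[OF \<rho>(1)])
  then show "tv cs \<rho> (Ex v f) = sat D I (w \<circ> \<rho>) (Ex v f)"
    and "tv cs \<rho> (All v f) = sat D I (w \<circ> \<rho>) (All v f)"
    using type_branch_children[OF branch] by auto
qed

(* tv binds each variable to the level at which it was introduced, and level j stands for the
   element w j; so tv sees the assignment w \<circ> \<rho>.  Level 0 carries no element, and an atom is
   read at the maximal level of its arguments, whence the conditions on \<rho> and on the arities. *)
lemma tv_type_branch:
  assumes arity: "\<forall>a\<in>set sig. 1 \<le> a"
  shows "wf sig \<phi> \<Longrightarrow> qd \<phi> \<le> e \<Longrightarrow> type_branch sig D I e w cs \<Longrightarrow>
    \<forall>y. \<rho> y < length cs \<Longrightarrow> \<forall>y\<in>fv \<phi>. 1 \<le> \<rho> y \<Longrightarrow>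
    tv cs \<rho> \<phi> = sat D I (w \<circ> \<rho>) \<phi>"
proof (induction \<phi> arbitrary: cs \<rho> w e)
  case (Atom p xs)
  then have p: "p < length sig" "length xs = sig ! p" by auto
  then have "xs \<noteq> []" using arity by (metis One_nat_def list.size(3) not_one_le_zero nth_mem)
  define j where "j = Max (set (map \<rho> xs))"
  have "j \<in> set (map \<rho> xs)" unfolding j_def using \<open>xs \<noteq> []\<close> by (intro Max_in) auto
  moreover have "\<forall>x\<in>set xs. 1 \<le> \<rho> x \<and> \<rho> x \<le> j" using Atom.prems(5) j_def by auto
  ultimately have "(p, map \<rho> xs) \<in> set (newatoms sig j)" and "j < length cs"
    using p Atom.prems(4) by (auto simp: mem_newatoms_iff)
  moreover have "tv cs \<rho> (Atom p xs) \<longleftrightarrow> (p, map \<rho> xs) \<in> catoms (cs ! j)" by (simp add: j_def)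
  ultimately show ?case using Atom.prems(3) by (simp add: type_branch_def true_atoms_def o_def)
next
  case (Ex v f)
  then obtain e' where e: "e = Suc e'" and "qd f \<le> e'" by (cases e) auto
  show ?case
  proof (rule tv_type_branch_quantifiers(1))
    show "tv cs' \<rho>' f = sat D I (w' \<circ> \<rho>') f"
      if "type_branch sig D I e' w' cs'" "\<forall>y. \<rho>' y < length cs'" "\<forall>y\<in>fv f. 1 \<le> \<rho>' y"
      for cs' \<rho>' w'
      using Ex.IH Ex.prems(1) \<open>qd f \<le> e'\<close> that by (simp add: o_def)
  qed (use Ex.prems e in simp_all)
next
  case (All v f)
  then obtain e' where e: "e = Suc e'" and "qd f \<le> e'" by (cases e) auto
  show ?case
  proof (rule tv_type_branch_quantifiers(2))
    show "tv cs' \<rho>' f = sat D I (w' \<circ> \<rho>') f"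
      if "type_branch sig D I e' w' cs'" "\<forall>y. \<rho>' y < length cs'" "\<forall>y\<in>fv f. 1 \<le> \<rho>' y"
      for cs' \<rho>' w'
      using All.IH All.prems(1) \<open>qd f \<le> e'\<close> that by (simp add: o_def)
  qed (use All.prems e in simp_all)
qed auto

lemma sat_cong_fv: "\<forall>x\<in>fv f. v x = v' x \<Longrightarrow> sat D I v f = sat D I v' f"
proof (induction f arbitrary: v v')
  case (Atom p xs)
  then show ?case by (simp cong: map_cong)
next
  case (Ex x f)
  then have "sat D I (v(x := a)) f = sat D I (v'(x := a)) f" for a by (intro Ex.IH) auto
  then show ?case by simp
next
  case (All x f)
  then have "sat D I (v(x := a)) f = sat D I (v'(x := a)) f" for a by (intro All.IH) auto
  then show ?case by simp
qed (simp add: ball_Un; metis)+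

lemma tv_type_cst_sentence:
  assumes "\<forall>a\<in>set sig. 1 \<le> a" "sentence sig f" "qd f \<le> e"
  shows "tv [type_cst sig D I e 0 v] (\<lambda>_. 0) f = sat D I v f"
proof -
  have "tv [type_cst sig D I e 0 v] (\<lambda>_. 0) f = sat D I (v \<circ> (\<lambda>_. 0)) f"
    using assms by (intro tv_type_branch) (auto simp: sentence_def type_branch_def catoms_type_cst)
  also have "\<dots> = sat D I v f"
    using assms(2) by (intro sat_cong_fv) (auto simp: sentence_def)
  finally show ?thesis .
qed

section \<open>A structure satisfies the formula of its type\<close>

lemma sat_foldr_Conj: "sat D I w (foldr Conj xs b) \<longleftrightarrow> (\<forall>x\<in>set xs. sat D I w x) \<and> sat D I w b"
  by (induction xs) auto

lemma sat_foldr_Disj: "sat D I w (foldr Disj xs b) \<longleftrightarrow> (\<exists>x\<in>set xs. sat D I w x) \<or> sat D I w b"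
  by (induction xs) auto

lemma set_some_distinct_list: "finite X \<Longrightarrow> set (SOME xs. set xs = X \<and> distinct xs) = X"
  by (metis (mono_tags, lifting) finite_distinct_list someI_ex)

lemma sat_conj_set: "finite X \<Longrightarrow> sat D I w (conj_set X) \<longleftrightarrow> (\<forall>x\<in>X. sat D I w x)"
  by (simp add: conj_set_def sat_foldr_Conj set_some_distinct_list)

lemma sat_disj_set: "finite X \<Longrightarrow> sat D I w (disj_set X) \<longleftrightarrow> (\<exists>x\<in>X. sat D I w x)"
  by (simp add: disj_set_def sat_foldr_Disj set_some_distinct_list)

lemma sat_atomic_conj_true_atoms: "sat D I w (atomic_conj sig k (true_atoms sig I k w))"
  unfolding atomic_conj_def sat_foldr_Conj by (auto simp: true_atoms_def)

lemma sat_to_fm_type_cst: "sat D I w (to_fm sig (type_cst sig D I e k w) k)"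
proof (induction e arbitrary: k w)
  case 0
  then show ?case by (simp add: sat_atomic_conj_true_atoms)
next
  case (Suc e)
  obtain S where S: "type_cst sig D I (Suc e) k w = Node (true_atoms sig I k w) S" by simp
  have "fset S = (\<lambda>a. type_cst sig D I e (Suc k) (w(Suc k := a))) ` D"
    using fset_children_type_cst[of sig D I e k w] S by simp
  then have "\<forall>c\<in>fset S. \<exists>a\<in>D. sat D I (w(Suc k := a)) (to_fm sig c (Suc k))"
    and "\<forall>a\<in>D. \<exists>c\<in>fset S. sat D I (w(Suc k := a)) (to_fm sig c (Suc k))"
    using Suc.IH by auto
  then have "sat D I w (conj_set (fset (fimage (\<lambda>c. Ex (Suc k) (to_fm sig c (Suc k))) S)))"
    and "sat D I w (All (Suc k) (disj_set (fset (fimage (\<lambda>c. to_fm sig c (Suc k)) S))))"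
    unfolding sat_conj_set[OF finite_fset] sat.simps sat_disj_set[OF finite_fset] by auto
  then show ?case unfolding S by (simp add: sat_atomic_conj_true_atoms)
qed

lemma type_cst_not_triv:
  fixes D :: "'a set"
  assumes "\<forall>d. \<forall>\<delta>\<in>Delta sig d. triv \<delta> \<longrightarrow>
        \<not> (\<exists>(D :: 'a set) I v. D \<noteq> {} \<and> range v \<subseteq> D \<and> sat D I v (to_fm sig \<delta> 0))"
    and "D \<noteq> {}" "range v \<subseteq> D"
  shows "\<not> triv (type_cst sig D I e 0 v)"
proof
  assume "triv (type_cst sig D I e 0 v)"
  then have "\<not> (\<exists>(D' :: 'a set) I' v'. D' \<noteq> {} \<and> range v' \<subseteq> D' \<and>
      sat D' I' v' (to_fm sig (type_cst sig D I e 0 v) 0))"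
    using assms(1) type_cst_Delta by blast
  then show False
    using assms(2,3) sat_to_fm_type_cst[of D I v sig e 0] by blast
qed

section \<open>Sentences as sets of paths\<close>

definition dnf_paths :: "nat list \<Rightarrow> fm \<Rightarrow> (nat \<Rightarrow> cst) set" where
  "dnf_paths sig f = {x \<in> Psi sig. x (qd f) \<in> dnf sig f}"

lemma bold_eq_indicator: "bold sig f = indicator (dnf_paths sig f)"
proof
  fix x
  show "bold sig f x = indicator (dnf_paths sig f) x"
  proof (cases "x \<in> Psi sig")
    case True
    have "bold sig f x = (\<Sum>\<delta>\<in>dnf sig f. if x (qd f) = \<delta> then 1 else 0)"
      unfolding bold_def by (rule sum.cong) (auto simp: cyl_def indicator_def True)
    then show ?thesis
      using True finite_dnf by (simp add: sum.delta indicator_def dnf_paths_def)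
  qed (simp add: bold_def cyl_def dnf_paths_def)
qed

lemma dnf_paths_Neg: "dnf_paths sig f \<inter> dnf_paths sig (Neg f) = {}"
  by (auto simp: dnf_paths_def dnf_def)

lemma dnf_paths_Disj: "dnf_paths sig (Disj f g) = dnf_paths sig f \<union> dnf_paths sig g"
  using Psi_dnf_iff_tv[of _ sig f "max (qd f) (qd g)"] Psi_dnf_iff_tv[of _ sig g "max (qd f) (qd g)"]
    Psi_dnf_iff_tv[of _ sig "Disj f g" "max (qd f) (qd g)"]
  by (auto simp: dnf_paths_def)

lemma cyl_type_cst_subset_dnf_paths:
  assumes "\<forall>a\<in>set sig. 1 \<le> a" "sentence sig f" "qd f \<le> e" "sat D I v f"
  shows "cyl sig e (type_cst sig D I e 0 v) \<subseteq> dnf_paths sig f"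
  using assms Psi_dnf_iff_tv[of _ sig f e] tv_type_cst_sentence[OF assms(1-3), of D I v]
  by (auto simp: cyl_def dnf_paths_def)

section \<open>Measures of cylinders\<close>

lemma cyl_sets:
  assumes "induced_measure sig H \<beta>" "\<delta> \<in> Delta sig d"
  shows "cyl sig d \<delta> \<in> sets \<beta>"
proof -
  have "openin (topology_generated_by (cyls sig)) (cyl sig d \<delta>)"
    using assms(2) by (auto simp: openin_topology_generated_by_iff cyls_def
        intro: generate_topology_on.Basis)
  moreover have "cyl sig d \<delta> = cyl sig d \<delta> \<inter> Psi sig" by (auto simp: cyl_def)
  ultimately have "openin (Psi_topology sig) (cyl sig d \<delta>)"
    unfolding Psi_topology_def openin_subtopology by blast
  then show ?thesis
    using assms(1) by (auto simp: induced_measure_def Psi_borel_def intro: sigma_sets.Basic)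
qed

lemma dnf_paths_sets:
  assumes "induced_measure sig H \<beta>"
  shows "dnf_paths sig f \<in> sets \<beta>"
proof -
  have "dnf_paths sig f = (\<Union>\<delta>\<in>dnf sig f. cyl sig (qd f) \<delta>)"
    by (auto simp: cyl_def dnf_paths_def)
  then show ?thesis
    using finite_dnf cyl_sets[OF assms] by (auto simp: dnf_def)
qed

lemma inner_L2_bold:
  assumes "induced_measure sig H \<beta>"
  shows "inner_L2 \<beta> (bold sig f) (bold sig g) = measure \<beta> (dnf_paths sig f \<inter> dnf_paths sig g)"
proof -
  interpret prob_space \<beta> using assms by (simp add: induced_measure_def)
  show ?thesis
    using dnf_paths_sets[OF assms]
    by (simp add: inner_L2_def bold_eq_indicator indicator_inter_arith[symmetric])
qed

lemma cyl_measure_pos: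
  assumes "reasonable sig triv H" "induced_measure sig H \<beta>" "\<delta> \<in> Delta sig d" "\<not> triv \<delta>"
  shows "measure \<beta> (cyl sig d \<delta>) > 0"
  using assms by (auto simp: reasonable_def induced_measure_def)

lemma inner_L2_bold_pos_if_sat:
  fixes D :: "'a set"
  assumes arity: "\<forall>a\<in>set sig. 1 \<le> a"
    and triv_incons: "\<forall>d. \<forall>\<delta>\<in>Delta sig d. triv \<delta> \<longrightarrow>
        \<not> (\<exists>(D :: 'a set) I v. D \<noteq> {} \<and> range v \<subseteq> D \<and> sat D I v (to_fm sig \<delta> 0))"
    and H: "reasonable sig triv H" and \<beta>: "induced_measure sig H \<beta>"
    and s: "sentence sig \<phi>1" "sentence sig \<phi>2"
    and D: "D \<noteq> {}" "range v \<subseteq> D" and sat: "sat D I v \<phi>1" "sat D I v \<phi>2"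
  shows "inner_L2 \<beta> (bold sig \<phi>1) (bold sig \<phi>2) > 0"
proof -
  interpret prob_space \<beta> using \<beta> by (simp add: induced_measure_def)
  define e where "e = max (qd \<phi>1) (qd \<phi>2)"
  define C where "C = cyl sig e (type_cst sig D I e 0 v)"
  have "C \<subseteq> dnf_paths sig \<phi>1"
    unfolding C_def e_def by (rule cyl_type_cst_subset_dnf_paths[OF arity s(1) _ sat(1)]) simp
  moreover have "C \<subseteq> dnf_paths sig \<phi>2"
    unfolding C_def e_def by (rule cyl_type_cst_subset_dnf_paths[OF arity s(2) _ sat(2)]) simp
  ultimately have "measure \<beta> C \<le> measure \<beta> (dnf_paths sig \<phi>1 \<inter> dnf_paths sig \<phi>2)"
    using dnf_paths_sets[OF \<beta>] by (intro finite_measure_mono) auto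
  moreover have "measure \<beta> C > 0"
    unfolding C_def using H \<beta> type_cst_Delta type_cst_not_triv[OF triv_incons D]
    by (rule cyl_measure_pos)
  ultimately show ?thesis by (simp add: inner_L2_bold[OF \<beta>])
qed

theorem mainTheorem9:
  fixes sig :: "nat list" and triv :: "cst \<Rightarrow> bool" and H :: "nat \<Rightarrow> cst \<Rightarrow> real"
    and \<beta> :: "(nat \<Rightarrow> cst) measure"
  assumes arity: "\<forall>a\<in>set sig. 1 \<le> a"
    and triv_incons: "\<forall>d. \<forall>\<delta>\<in>Delta sig d. triv \<delta> \<longrightarrow>
        \<not> (\<exists>(D :: 'a set) I v. D \<noteq> {} \<and> range v \<subseteq> D \<and> sat D I v (to_fm sig \<delta> 0))"
    and H: "reasonable sig triv H"
    and \<beta>: "induced_measure sig H \<beta>"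
  shows "(\<forall>\<phi>. sentence sig \<phi> \<longrightarrow> inner_L2 \<beta> (bold sig \<phi>) (bold sig (Neg \<phi>)) = 0)
    \<and> (\<forall>\<phi>1 \<phi>2. sentence sig \<phi>1 \<longrightarrow> sentence sig \<phi>2 \<longrightarrow>
          (AE x in \<beta>. bold sig (Disj \<phi>1 \<phi>2) x = max (bold sig \<phi>1 x) (bold sig \<phi>2 x)))
    \<and> (\<forall>\<phi>1 \<phi>2. sentence sig \<phi>1 \<longrightarrow> sentence sig \<phi>2 \<longrightarrow>
          inner_L2 \<beta> (bold sig \<phi>1) (bold sig \<phi>2) = 0 \<longrightarrow>
          (\<forall>(D :: 'a set) I v. D \<noteq> {} \<longrightarrow> range v \<subseteq> D \<longrightarrow>
              sat D I v \<phi>1 \<longrightarrow> sat D I v (Neg \<phi>2)))"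
proof (intro conjI allI impI)
  show "inner_L2 \<beta> (bold sig \<phi>) (bold sig (Neg \<phi>)) = 0" for \<phi>
    by (simp add: inner_L2_bold[OF \<beta>] dnf_paths_Neg)
  show "AE x in \<beta>. bold sig (Disj \<phi>1 \<phi>2) x = max (bold sig \<phi>1 x) (bold sig \<phi>2 x)" for \<phi>1 \<phi>2
    by (rule AE_I2) (simp add: bold_eq_indicator dnf_paths_Disj indicator_def)
  show "sat D I v (Neg \<phi>2)"
    if "sentence sig \<phi>1" "sentence sig \<phi>2" "inner_L2 \<beta> (bold sig \<phi>1) (bold sig \<phi>2) = 0"
      and "D \<noteq> {}" "range v \<subseteq> D" "sat D I v \<phi>1"
    for \<phi>1 \<phi>2 and D :: "'a set" and I v
  proof (rule ccontr)
    assume "\<not> sat D I v (Neg \<phi>2)"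
    then have "inner_L2 \<beta> (bold sig \<phi>1) (bold sig \<phi>2) > 0"
      using inner_L2_bold_pos_if_sat[OF arity triv_incons H \<beta> that(1,2,4-6)] by simp
    with that(3) show False by simp
  qed
qed

end
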